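(* Let $\mathcal U$ be a finite set of size $n$, $\Pi$ an orthogonal projector on $L_2(\mathcal U)$, and $\mathcal D$ a finitely supported probability distribution over $L_2(\mathcal U)$. For $u\in\mathcal U$ let $\delta_u$ be the function with $\delta_u(u)=n$ and $\delta_u(v)=0$ for $v\neq u$. Then $$\mathbb{E}_{f\sim\mathcal D}\|\Pi f\|_4^4\le\left(\mathbb{E}_{f,f'\sim\mathcal D}\langle f,\Pi f'\rangle^4\right)^{1/2}\left(\mathbb{E}_{u\in\mathcal U}\|\Pi\delta_u\|_4^4\right)^{1/2},$$ where $f,f'$ are independent samples from $\mathcal D$ and $u$ is uniform on $\mathcal U$.
   Context: $L_2(\mathcal U)$ is the space of functions $\mathcal U\to\mathbb{R}$ with the uniform (expectation) measure: $\langle f,g\rangle=\mathbb{E}_{u\in\mathcal U}f(u)g(u)$, $\|f\|_p=(\mathbb{E}_{u}|f(u)|^p)^{1/p}$; orthogonality refers to this inner product. *)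

theory Defs
  imports "HOL-Probability.Probability"
begin

definition L2_inner :: "('u::finite \<Rightarrow> real) \<Rightarrow> ('u \<Rightarrow> real) \<Rightarrow> real" where
  "L2_inner f g = (\<Sum>u\<in>UNIV. f u * g u) / real CARD('u)"

definition L4_norm_pow4 :: "('u::finite \<Rightarrow> real) \<Rightarrow> real" where
  "L4_norm_pow4 f = (\<Sum>u\<in>UNIV. \<bar>f u\<bar> ^ 4) / real CARD('u)"

definition orth_projector :: "(('u::finite \<Rightarrow> real) \<Rightarrow> ('u \<Rightarrow> real)) \<Rightarrow> bool" where
  "orth_projector P \<longleftrightarrow>
     (\<forall>f g. P (\<lambda>u. f u + g u) = (\<lambda>u. P f u + P g u)) \<and>
     (\<forall>c f. P (\<lambda>u. c * f u) = (\<lambda>u. c * P f u)) \<and>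
     (\<forall>f. P (P f) = P f) \<and>
     (\<forall>f g. L2_inner (P f) g = L2_inner f (P g))"

definition delta_fn :: "'u::finite \<Rightarrow> 'u \<Rightarrow> real" where
  "delta_fn u = (\<lambda>v. if v = u then real CARD('u) else 0)"

end

theory Submission
  imports Defs "HOL-Analysis.Convex"
begin

text \<open>
  Write \<open>g u = \<Pi> \<delta>\<^sub>u\<close>. Self-adjointness and idempotence give \<open>(\<Pi> f) u = \<langle>\<Pi> f, g u\<rangle>\<close>, and in
  particular \<open>\<langle>g u, g u'\<rangle> = g u u'\<close>. Since \<open>\<langle>p, q\<rangle>\<^sup>4\<close> is the inner product of the fourth
  tensor powers of \<open>p\<close> and \<open>q\<close>, the left-hand side is the inner product of the averaged tensors
  \<open>E\<^sub>f (\<Pi> f)\<^sup>\<otimes>\<^sup>4\<close> and \<open>E\<^sub>u (g u)\<^sup>\<otimes>\<^sup>4\<close>; Cauchy-Schwarz bounds it by the product of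
  their norms, whose squares are exactly the two expectations on the right.
\<close>

lemma L2_inner_commute: "L2_inner f g = L2_inner g f"
  unfolding L2_inner_def by (simp add: mult.commute)

lemma L2_inner_delta_fn: "L2_inner h (delta_fn u) = h u"
proof -
  have "(\<Sum>v\<in>UNIV. h v * delta_fn u v) = h u * real CARD('a)"
    by (simp add: delta_fn_def if_distrib cong: if_cong)
  then show ?thesis
    unfolding L2_inner_def by simp
qed

lemma L2_inner_le_sqrt:
  "L2_inner f g \<le> sqrt (L2_inner f f) * sqrt (L2_inner g g)"
proof -
  have "(L2_inner f g)\<^sup>2 \<le> L2_inner f f * L2_inner g g"
    using Cauchy_Schwarz_ineq_sum[of f g UNIV]
    unfolding L2_inner_def by (simp add: power2_eq_square divide_right_mono)
  then show ?thesis
    by (metis real_le_rsqrt real_sqrt_mult)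
qed

definition tensor_square :: "('a \<Rightarrow> real) \<Rightarrow> 'a \<times> 'a \<Rightarrow> real" where
  "tensor_square p = (\<lambda>(a, b). p a * p b)"

lemma L2_inner_tensor_square:
  fixes p q :: "'a::finite \<Rightarrow> real"
  shows "L2_inner (tensor_square p) (tensor_square q) = (L2_inner p q)\<^sup>2"
proof -
  have "(\<Sum>z\<in>UNIV. tensor_square p z * tensor_square q z)
      = (\<Sum>(a, b)\<in>UNIV \<times> UNIV. (p a * q a) * (p b * q b))"
    by (simp add: tensor_square_def case_prod_beta mult_ac)
  also have "\<dots> = (\<Sum>a\<in>UNIV. \<Sum>b\<in>UNIV. (p a * q a) * (p b * q b))"
    by (simp add: sum.cartesian_product)
  also have "\<dots> = (\<Sum>a\<in>UNIV. p a * q a)\<^sup>2"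
    by (simp add: power2_eq_square sum_product)
  finally show ?thesis
    unfolding L2_inner_def by (simp add: power_divide power2_eq_square)
qed

lemma L2_inner_tensor_square_twice:
  fixes p q :: "'a::finite \<Rightarrow> real"
  shows "L2_inner (tensor_square (tensor_square p)) (tensor_square (tensor_square q))
    = (L2_inner p q) ^ 4"
  by (simp add: L2_inner_tensor_square flip: power_mult)

lemma expectation_L2_inner_left:
  fixes F :: "'a \<Rightarrow> 'w::finite \<Rightarrow> real"
  assumes "finite (set_pmf D)"
  shows "measure_pmf.expectation D (\<lambda>x. L2_inner (F x) g)
    = L2_inner (\<lambda>w. measure_pmf.expectation D (\<lambda>x. F x w)) g"
  unfolding L2_inner_def
  by (simp add: integrable_measure_pmf_finite[OF assms])

lemma expectation_L2_inner_right:
  fixes G :: "'a \<Rightarrow> 'w::finite \<Rightarrow> real"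
  assumes "finite (set_pmf D)"
  shows "measure_pmf.expectation D (\<lambda>y. L2_inner f (G y))
    = L2_inner f (\<lambda>w. measure_pmf.expectation D (\<lambda>y. G y w))"
  using expectation_L2_inner_left[OF assms, of G f] by (simp add: L2_inner_commute)

lemma expectation_expectation_L2_inner:
  fixes F :: "'a \<Rightarrow> 'w::finite \<Rightarrow> real" and G :: "'b \<Rightarrow> 'w \<Rightarrow> real"
  assumes "finite (set_pmf D)" "finite (set_pmf E)"
  shows "measure_pmf.expectation D (\<lambda>x. measure_pmf.expectation E (\<lambda>y. L2_inner (F x) (G y)))
    = L2_inner (\<lambda>w. measure_pmf.expectation D (\<lambda>x. F x w))
               (\<lambda>w. measure_pmf.expectation E (\<lambda>y. G y w))"
  by (simp add: expectation_L2_inner_right[OF assms(2)] expectation_L2_inner_left[OF assms(1)])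

lemma expectation_L2_inner_le_sqrt:
  fixes F :: "'a \<Rightarrow> 'w::finite \<Rightarrow> real" and G :: "'b \<Rightarrow> 'w \<Rightarrow> real"
  assumes "finite (set_pmf D)" "finite (set_pmf E)"
  shows "measure_pmf.expectation D (\<lambda>x. measure_pmf.expectation E (\<lambda>y. L2_inner (F x) (G y)))
    \<le> sqrt (measure_pmf.expectation D (\<lambda>x. measure_pmf.expectation D (\<lambda>x'. L2_inner (F x) (F x'))))
      * sqrt (measure_pmf.expectation E (\<lambda>y. measure_pmf.expectation E (\<lambda>y'. L2_inner (G y) (G y'))))"
  by (simp add: expectation_expectation_L2_inner assms L2_inner_le_sqrt)

lemma expectation_uniform_UNIV:
  "measure_pmf.expectation (pmf_of_set (UNIV :: 'a::finite set)) h = (\<Sum>u\<in>UNIV. h u) / real CARD('a)"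
  by (simp add: integral_pmf_of_set)

context
  fixes P :: "('u::finite \<Rightarrow> real) \<Rightarrow> ('u \<Rightarrow> real)"
  assumes P: "orth_projector P"
begin

lemma orth_projector_inner_left: "L2_inner (P f) (P g) = L2_inner f (P g)"
  using P unfolding orth_projector_def by metis

lemma orth_projector_apply: "P f u = L2_inner (P f) (P (delta_fn u))"
proof -
  have "P f u = L2_inner (P (P f)) (delta_fn u)"
    using P by (simp add: L2_inner_delta_fn orth_projector_def)
  also have "\<dots> = L2_inner (P f) (P (delta_fn u))"
    using P unfolding orth_projector_def by blast
  finally show ?thesis .
qed

end

theorem lemma4p6:
  fixes P :: "('u::finite \<Rightarrow> real) \<Rightarrow> ('u \<Rightarrow> real)"
    and D :: "('u \<Rightarrow> real) pmf"
  assumes "orth_projector P"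
    and "finite (set_pmf D)"
  shows "measure_pmf.expectation D (\<lambda>f. L4_norm_pow4 (P f))
    \<le> sqrt (measure_pmf.expectation D (\<lambda>f. measure_pmf.expectation D (\<lambda>f'. (L2_inner f (P f')) ^ 4)))
      * sqrt ((\<Sum>u\<in>UNIV. L4_norm_pow4 (P (delta_fn u))) / real CARD('u))"
proof -
  define U where "U = pmf_of_set (UNIV :: 'u set)"
  define T where "T p = tensor_square (tensor_square p)" for p :: "'u \<Rightarrow> real"
  define g where "g u = P (delta_fn u)" for u
  have U_finite: "finite (set_pmf U)"
    unfolding U_def by simp
  have proj: "P f u = L2_inner (P f) (g u)" for f u
    unfolding g_def using orth_projector_apply[OF assms(1)] .
  have "L4_norm_pow4 (P f) = measure_pmf.expectation U (\<lambda>u. L2_inner (T (P f)) (T (g u)))" for f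
    by (simp add: U_def expectation_uniform_UNIV L4_norm_pow4_def T_def
        L2_inner_tensor_square_twice flip: proj)
  moreover have "L2_inner (T (P f)) (T (P f')) = (L2_inner f (P f')) ^ 4" for f f'
    by (simp add: T_def L2_inner_tensor_square_twice orth_projector_inner_left[OF assms(1)])
  moreover have "measure_pmf.expectation U (\<lambda>u. measure_pmf.expectation U (\<lambda>u'. L2_inner (T (g u)) (T (g u'))))
      = (\<Sum>u\<in>UNIV. L4_norm_pow4 (g u)) / real CARD('u)"
  proof -
    have "L2_inner (T (g u)) (T (g u')) = (g u u') ^ 4" for u u'
      using proj[of "delta_fn u" u'] by (simp add: T_def L2_inner_tensor_square_twice g_def)
    then show ?thesis
      by (simp add: U_def expectation_uniform_UNIV L4_norm_pow4_def sum_divide_distrib)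
  qed
  ultimately show ?thesis
    using expectation_L2_inner_le_sqrt[OF assms(2) U_finite, of "\<lambda>f. T (P f)" "\<lambda>u. T (g u)"]
    by (simp add: g_def)
qed

end
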